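(* For every infinite computable set $R$, the cost function $\mathbf c_{\Omega,R}$ is benign.
   Context: $\Omega$: fixed left-c.e. ML-random real with computable increasing rational approximations $\Omega_s$. $k_s(n)=\lfloor-\log_2(\Omega_s-\Omega_n)\rfloor$; $\mathbf c_{\Omega,R}(n,s)=2^{-|R\cap k_s(n)|}$ with $R\cap m=R\cap\{0,\dots,m-1\}$. A cost function $\mathbf c$ is benign if there is a computable function $g$ such that for every rational $\epsilon>0$, every sequence $n_1<s_1\le n_2<s_2\le\cdots\le n_\ell<s_\ell$ with $\mathbf c(n_i,s_i)\ge\epsilon$ for all $i\le\ell$ has $\ell\le g(\epsilon)$. *)

theory Defs
  imports "HOL-Analysis.Analysis" "HOL-Library.Nat_Bijection"
begin

datatype recf = Zero | Succ | Proj nat | Comp recf "recf list" | Prim recf recf | Mu recf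

inductive eval :: "recf \<Rightarrow> nat list \<Rightarrow> nat \<Rightarrow> bool" where
  eval_Zero: "eval Zero xs 0"
| eval_Succ: "eval Succ (x # xs) (Suc x)"
| eval_Proj: "i < length xs \<Longrightarrow> eval (Proj i) xs (xs ! i)"
| eval_Comp: "length ys = length gs \<Longrightarrow> (\<forall>i < length gs. eval (gs ! i) xs (ys ! i))
              \<Longrightarrow> eval f ys z \<Longrightarrow> eval (Comp f gs) xs z"
| eval_Prim0: "eval f xs y \<Longrightarrow> eval (Prim f g) (0 # xs) y"
| eval_PrimS: "eval (Prim f g) (n # xs) y \<Longrightarrow> eval g (n # y # xs) z
              \<Longrightarrow> eval (Prim f g) (Suc n # xs) z"
| eval_Mu: "eval f (y # xs) 0 \<Longrightarrow> (\<forall>z < y. \<exists>v. eval f (z # xs) v \<and> v \<noteq> 0)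
              \<Longrightarrow> eval (Mu f) xs y"

definition computable :: "(nat \<Rightarrow> nat) \<Rightarrow> bool" where
  "computable f \<longleftrightarrow> (\<exists>c. \<forall>x. eval c [x] (f x))"

definition computable_set :: "nat set \<Rightarrow> bool" where
  "computable_set A \<longleftrightarrow> computable (\<lambda>x. if x \<in> A then 1 else 0)"

definition ce_set :: "nat set \<Rightarrow> bool" where
  "ce_set A \<longleftrightarrow> (\<exists>c. \<forall>x. x \<in> A \<longleftrightarrow> (\<exists>y. eval c [x] y))"

definition computable_rat_seq :: "(nat \<Rightarrow> rat) \<Rightarrow> bool" where
  "computable_rat_seq r \<longleftrightarrow> (\<exists>p q d. computable p \<and> computable q \<and> computable d \<and>
     (\<forall>s. d s > 0 \<and> r s = (of_nat (p s) - of_nat (q s)) / of_nat (d s)))"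

definition computable_rat_fun :: "(rat \<Rightarrow> nat) \<Rightarrow> bool" where
  "computable_rat_fun g \<longleftrightarrow> (\<exists>h. computable h \<and>
     (\<forall>a b. b > 0 \<longrightarrow> g (of_nat a / of_nat b) = h (prod_encode (a, b))))"

text \<open>Codes of dyadic intervals [a/2^k, (a+1)/2^k), a integer.\<close>
definition dyadic_interval :: "nat \<Rightarrow> real set" where
  "dyadic_interval c = (case prod_decode c of (k, a) \<Rightarrow>
      {of_int (int_decode a) / 2 ^ k ..< (of_int (int_decode a) + 1) / 2 ^ k})"

text \<open>The n-th level of the test given by a c.e. set W of codes of pairs (n, interval).\<close>
definition test_level :: "nat set \<Rightarrow> nat \<Rightarrow> real set" where
  "test_level W n = \<Union> {dyadic_interval c | c. prod_encode (n, c) \<in> W}"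

definition mltest :: "nat set \<Rightarrow> bool" where
  "mltest W \<longleftrightarrow> ce_set W \<and>
     (\<forall>n. emeasure lborel (test_level W n) \<le> ennreal ((1/2) ^ n))"

definition ml_random :: "real \<Rightarrow> bool" where
  "ml_random x \<longleftrightarrow> (\<forall>W. mltest W \<longrightarrow> (\<exists>n. x \<notin> test_level W n))"

definition left_ce_approx :: "(nat \<Rightarrow> rat) \<Rightarrow> real \<Rightarrow> bool" where
  "left_ce_approx r x \<longleftrightarrow> computable_rat_seq r \<and> strict_mono r \<and>
     (\<lambda>s. real_of_rat (r s)) \<longlonglongrightarrow> x"

definition kfun :: "(nat \<Rightarrow> rat) \<Rightarrow> nat \<Rightarrow> nat \<Rightarrow> int" where
  "kfun r n s = \<lfloor>- log 2 (real_of_rat (r s - r n))\<rfloor>"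

text \<open>R \<inter> m = R \<inter> {0..m-1}; for negative k this is empty, hence nat k.\<close>
definition cost_OmegaR :: "(nat \<Rightarrow> rat) \<Rightarrow> nat set \<Rightarrow> nat \<Rightarrow> nat \<Rightarrow> real" where
  "cost_OmegaR r R n s = (1/2) ^ card (R \<inter> {..< nat (kfun r n s)})"

definition benign :: "(nat \<Rightarrow> nat \<Rightarrow> real) \<Rightarrow> bool" where
  "benign c \<longleftrightarrow> (\<exists>g. computable_rat_fun g \<and>
     (\<forall>\<epsilon>::rat. \<epsilon> > 0 \<longrightarrow> (\<forall>(l::nat) ns ss.
        (\<forall>i<l. ns i < ss i) \<and> (\<forall>i. Suc i < l \<longrightarrow> ss i \<le> ns (Suc i)) \<and>
        (\<forall>i<l. c (ns i) (ss i) \<ge> real_of_rat \<epsilon>) \<longrightarrow> l \<le> g \<epsilon>)))"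

end

(*
  Let t(N) be the least t such that R \<inter> {..<t} has more than N elements; t is computable
  since R is computable and infinite. If c_{\<Omega>,R}(n, s) \<ge> \<epsilon>, then |R \<inter> k_s(n)| \<le> log\<^sub>2 (1/\<epsilon>)
  \<le> \<lfloor>1/\<epsilon>\<rfloor>, so k_s(n) < t(\<lfloor>1/\<epsilon>\<rfloor>), i.e. \<Omega>_s - \<Omega>_n > 2^-t(\<lfloor>1/\<epsilon>\<rfloor>). The intervals
  [\<Omega>_{n_i}, \<Omega>_{s_i}] of a sequence as in the definition of benignity do not overlap and lie
  in [\<Omega>_0, \<Omega>], so there are at most \<lceil>\<Omega> - \<Omega>_0\<rceil> * 2^t(\<lfloor>1/\<epsilon>\<rfloor>) of them, which is a
  computable function of \<epsilon>.
*)

theory Submission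
  imports Defs
begin

definition computable_n :: "nat \<Rightarrow> (nat list \<Rightarrow> nat) \<Rightarrow> bool" where
  "computable_n k F \<longleftrightarrow> (\<exists>c. \<forall>xs. length xs = k \<longrightarrow> eval c xs (F xs))"

lemma computable_n_cong:
  "computable_n k F \<Longrightarrow> (\<And>xs. length xs = k \<Longrightarrow> F xs = G xs) \<Longrightarrow> computable_n k G"
  unfolding computable_n_def by metis

lemma computable_iff_computable_n: "computable f \<longleftrightarrow> computable_n 1 (\<lambda>xs. f (xs ! 0))"
  unfolding computable_def computable_n_def
  by (metis (no_types, lifting) One_nat_def length_Suc_conv length_0_conv list.size(3) nth_Cons_0)

lemma computable_n_zero: "computable_n k (\<lambda>_. 0)"
  unfolding computable_n_def using eval_Zero by blast

lemma computable_n_proj: "i < k \<Longrightarrow> computable_n k (\<lambda>xs. xs ! i)"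
  unfolding computable_n_def using eval_Proj by metis

lemma computable_Suc: "computable Suc"
  unfolding computable_def using eval_Succ by blast

lemma computable_n_compose1:
  assumes "computable f" "computable_n k F"
  shows "computable_n k (\<lambda>xs. f (F xs))"
proof -
  obtain cf where f: "\<And>x. eval cf [x] (f x)" using assms(1) computable_def by auto
  obtain cF where F: "\<And>xs. length xs = k \<Longrightarrow> eval cF xs (F xs)"
    using assms(2) computable_n_def by auto
  have "eval (Comp cf [cF]) xs (f (F xs))" if "length xs = k" for xs
    using f F that by (intro eval_Comp[where ys="[F xs]"]) auto
  then show ?thesis unfolding computable_n_def by blast
qed

lemma computable_n_compose2:
  assumes "computable_n 2 (\<lambda>xs. f (xs ! 0) (xs ! 1))" "computable_n k F" "computable_n k G"
  shows "computable_n k (\<lambda>xs. f (F xs) (G xs))"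
proof -
  obtain cf where f: "\<And>xs. length xs = 2 \<Longrightarrow> eval cf xs (f (xs ! 0) (xs ! 1))"
    using assms(1) computable_n_def by auto
  obtain cF where F: "\<And>xs. length xs = k \<Longrightarrow> eval cF xs (F xs)"
    using assms(2) computable_n_def by auto
  obtain cG where G: "\<And>xs. length xs = k \<Longrightarrow> eval cG xs (G xs)"
    using assms(3) computable_n_def by auto
  have "eval (Comp cf [cF, cG]) xs (f (F xs) (G xs))" if "length xs = k" for xs
    using f[of "[F xs, G xs]"] F G that
    by (intro eval_Comp[where ys="[F xs, G xs]"]) (auto simp: less_Suc_eq)
  then show ?thesis unfolding computable_n_def by blast
qed

lemma computable_n_prim:
  assumes "computable_n k B" "computable_n (Suc (Suc k)) S"
    and "\<And>ys. P 0 ys = B ys" "\<And>n ys. P (Suc n) ys = S (n # P n ys # ys)"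
  shows "computable_n (Suc k) (\<lambda>xs. P (hd xs) (tl xs))"
proof -
  obtain cB where B: "\<And>xs. length xs = k \<Longrightarrow> eval cB xs (B xs)"
    using assms(1) computable_n_def by auto
  obtain cS where S: "\<And>xs. length xs = Suc (Suc k) \<Longrightarrow> eval cS xs (S xs)"
    using assms(2) computable_n_def by auto
  have P: "eval (Prim cB cS) (n # ys) (P n ys)" if "length ys = k" for n ys
  proof (induction n)
    case 0
    then show ?case using B that assms(3) by (auto intro: eval_Prim0)
  next
    case (Suc n)
    then show ?case using S that assms(4) by (auto intro: eval_PrimS)
  qed
  show ?thesis unfolding computable_n_def
    by (rule exI[of _ "Prim cB cS"]) (auto simp: length_Suc_conv intro: P)
qed

lemma computable_n_mu:
  assumes "computable_n (Suc k) F" "\<And>xs. length xs = k \<Longrightarrow> \<exists>y. F (y # xs) = 0"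
  shows "computable_n k (\<lambda>xs. LEAST y. F (y # xs) = 0)"
proof -
  obtain cF where F: "\<And>xs. length xs = Suc k \<Longrightarrow> eval cF xs (F xs)"
    using assms(1) computable_n_def by auto
  have "eval (Mu cF) xs (LEAST y. F (y # xs) = 0)" if len: "length xs = k" for xs
  proof (rule eval_Mu)
    obtain y where "F (y # xs) = 0" using assms(2) len by blast
    then have "F ((LEAST y. F (y # xs) = 0) # xs) = 0" by (rule LeastI)
    then show "eval cF ((LEAST y. F (y # xs) = 0) # xs) 0"
      using F[of "(LEAST y. F (y # xs) = 0) # xs"] len by simp
    show "\<forall>z < (LEAST y. F (y # xs) = 0). \<exists>v. eval cF (z # xs) v \<and> v \<noteq> 0"
    proof (intro allI impI)
      fix z assume "z < (LEAST y. F (y # xs) = 0)"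
      then have "F (z # xs) \<noteq> 0" by (rule not_less_Least)
      then show "\<exists>v. eval cF (z # xs) v \<and> v \<noteq> 0" using F[of "z # xs"] len by auto
    qed
  qed
  then show ?thesis unfolding computable_n_def by blast
qed

lemma computable_n_const: "computable_n k (\<lambda>_. c)"
  by (induction c) (auto intro: computable_n_zero computable_n_compose1[OF computable_Suc])

lemma computable_primrec:
  assumes "computable_n 2 (\<lambda>xs. S (xs ! 0) (xs ! 1))"
    and "P 0 = b" "\<And>n. P (Suc n) = S n (P n)"
  shows "computable P"
proof -
  have "computable_n 1 (\<lambda>xs. (\<lambda>n (ys :: nat list). P n) (hd xs) (tl xs))"
    using computable_n_prim[of 0 "\<lambda>_. b" "\<lambda>xs. S (xs ! 0) (xs ! 1)" "\<lambda>n ys. P n"]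
      assms computable_n_const by (simp add: numeral_2_eq_2)
  then show ?thesis
    unfolding computable_iff_computable_n
    by (rule computable_n_cong) (auto simp: length_Suc_conv)
qed

lemma computable_least:
  assumes "computable_n 2 (\<lambda>xs. F (xs ! 0) (xs ! 1))" "\<And>x. \<exists>y. F y x = 0"
  shows "computable (\<lambda>x. LEAST y. F y x = 0)"
proof -
  have "computable_n 1 (\<lambda>xs. LEAST y. (\<lambda>ys. F (ys ! 0) (ys ! 1)) (y # xs) = 0)"
    by (rule computable_n_mu) (use assms in \<open>simp_all add: numeral_2_eq_2\<close>)
  then show ?thesis
    unfolding computable_iff_computable_n by (rule computable_n_cong) simp
qed

lemma computable_binary_primrec:
  assumes "computable f" "computable_n 3 (\<lambda>xs. S (xs ! 0) (xs ! 1) (xs ! 2))"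
    and "\<And>m. P 0 m = f m" "\<And>n m. P (Suc n) m = S n (P n m) m"
  shows "computable_n 2 (\<lambda>xs. P (xs ! 0) (xs ! 1))"
proof -
  have "computable_n (Suc 1) (\<lambda>xs. (\<lambda>n ys. P n (ys ! 0)) (hd xs) (tl xs))"
  proof (rule computable_n_prim)
    show "computable_n 1 (\<lambda>ys. f (ys ! 0))"
      using assms(1) computable_iff_computable_n by blast
    show "computable_n (Suc (Suc 1)) (\<lambda>xs. S (xs ! 0) (xs ! 1) (xs ! 2))"
      using assms(2) by (simp add: numeral_3_eq_3)
  qed (simp_all add: assms(3,4))
  then show ?thesis
    unfolding Suc_1 by (rule computable_n_cong) (auto simp: length_Suc_conv numeral_2_eq_2)
qed

lemma computable_id: "computable (\<lambda>n. n)"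
  using computable_n_proj[of 0 1] computable_iff_computable_n by simp

lemma computable_n_add:
  assumes "computable_n k F" "computable_n k G"
  shows "computable_n k (\<lambda>xs. F xs + G xs)"
proof -
  have "computable_n 3 (\<lambda>xs. Suc (xs ! 1))"
    by (rule computable_n_compose1[OF computable_Suc computable_n_proj]) simp
  then have "computable_n 2 (\<lambda>xs. xs ! 0 + xs ! 1)"
    by (rule computable_binary_primrec[OF computable_id, where S="\<lambda>n p m. Suc p"]) simp_all
  then show ?thesis using assms by (rule computable_n_compose2)
qed

lemma computable_n_mult:
  assumes "computable_n k F" "computable_n k G"
  shows "computable_n k (\<lambda>xs. F xs * G xs)"
proof -
  have "computable (\<lambda>_. 0)"
    using computable_iff_computable_n computable_n_zero by auto
  moreover have "computable_n 3 (\<lambda>xs. xs ! 2 + xs ! 1)"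
    using computable_n_add[OF computable_n_proj computable_n_proj, of 2 3 1] by simp
  ultimately have "computable_n 2 (\<lambda>xs. xs ! 0 * xs ! 1)"
    by (rule computable_binary_primrec[where S="\<lambda>n p m. m + p"]) simp_all
  then show ?thesis using assms by (rule computable_n_compose2)
qed

lemma computable_pred: "computable (\<lambda>n. n - 1)"
  by (rule computable_primrec[where S="\<lambda>n p. n"]) (simp_all add: computable_n_proj)

lemma computable_n_diff:
  assumes "computable_n k F" "computable_n k G"
  shows "computable_n k (\<lambda>xs. F xs - G xs)"
proof -
  have "computable_n 3 (\<lambda>xs. xs ! 1 - 1)"
    by (rule computable_n_compose1[OF computable_pred computable_n_proj]) simp
  then have "computable_n 2 (\<lambda>xs. xs ! 1 - xs ! 0)"
    by (rule computable_binary_primrec[OF computable_id, where S="\<lambda>n p m. p - 1"]) simp_all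
  then show ?thesis
    using computable_n_compose2[of "\<lambda>a b. b - a", OF _ assms(2,1)] by simp
qed

lemma Least_mult_diff_eq_div:
  "(LEAST q. b * (Suc a - b * Suc q) = 0) = a div (b :: nat)"
proof (cases "b = 0")
  case False
  show ?thesis
  proof (rule Least_equality)
    have "a mod b < b" using False by simp
    then have "a < b * (a div b) + b"
      using mult_div_mod_eq[of b a] by linarith
    then have "a < b * Suc (a div b)" by simp
    then show "b * (Suc a - b * Suc (a div b)) = 0" by simp
  next
    fix q assume "b * (Suc a - b * Suc q) = 0"
    then have "a < Suc q * b" using False by (simp add: mult.commute)
    then have "a div b < Suc q" by (rule less_mult_imp_div_less)
    then show "a div b \<le> q" by simp
  qed
qed simp

lemma computable_n_div:
  assumes "computable_n k F" "computable_n k G"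
  shows "computable_n k (\<lambda>xs. F xs div G xs)"
proof -
  have "computable_n 2
      (\<lambda>xs. LEAST q. (\<lambda>ys. ys ! 2 * (Suc (ys ! 1) - ys ! 2 * Suc (ys ! 0))) (q # xs) = 0)"
  proof (rule computable_n_mu[where F="\<lambda>ys. ys ! 2 * (Suc (ys ! 1) - ys ! 2 * Suc (ys ! 0))"])
    show "computable_n (Suc 2) (\<lambda>ys. ys ! 2 * (Suc (ys ! 1) - ys ! 2 * Suc (ys ! 0)))"
      by (intro computable_n_mult computable_n_diff computable_n_proj
          computable_n_compose1[OF computable_Suc]) simp_all
    fix xs :: "nat list"
    show "\<exists>q. (\<lambda>ys. ys ! 2 * (Suc (ys ! 1) - ys ! 2 * Suc (ys ! 0))) (q # xs) = 0"
      by (rule exI[of _ "xs ! 0"]) (cases "xs ! 1", simp_all)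
  qed
  then have "computable_n 2 (\<lambda>xs. xs ! 0 div xs ! 1)"
    by (rule computable_n_cong)
      (simp only: numeral_2_eq_2 One_nat_def nth_Cons_0 nth_Cons_Suc Least_mult_diff_eq_div)
  then show ?thesis using assms by (rule computable_n_compose2)
qed

lemma computable_power: "computable (\<lambda>n. b ^ n :: nat)"
proof (rule computable_primrec[where S="\<lambda>n p. p * b"])
  show "computable_n 2 (\<lambda>xs. xs ! 1 * b)"
    by (rule computable_n_mult[OF computable_n_proj computable_n_const]) simp
qed simp_all

lemma computable_triangle: "computable triangle"
proof (rule computable_primrec[where S="\<lambda>n p. p + Suc n"])
  show "computable_n 2 (\<lambda>xs. xs ! 1 + Suc (xs ! 0))"
    by (intro computable_n_add computable_n_proj computable_n_compose1[OF computable_Suc]) simp_all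
qed simp_all

lemma le_triangle: "n \<le> triangle n"
  by (induction n) auto

lemma mono_triangle: "mono triangle"
  by (rule mono_iff_le_Suc[THEN iffD2]) simp

lemma Least_triangle_greater_prod_encode:
  "(LEAST t. prod_encode (a, b) < triangle t) = Suc (a + b)"
proof (rule Least_equality)
  show "prod_encode (a, b) < triangle (Suc (a + b))" by (simp add: prod_encode_def)
next
  fix t assume "prod_encode (a, b) < triangle t"
  then have "triangle (a + b) < triangle t" by (simp add: prod_encode_def)
  then show "Suc (a + b) \<le> t" using monoD[OF mono_triangle, of t "a + b"] by linarith
qed

lemma computable_Least_triangle_greater: "computable (\<lambda>z. LEAST t. z < triangle t)"
proof -
  have "computable (\<lambda>z. LEAST t. Suc z - triangle t = 0)"
  proof (rule computable_least)
    show "computable_n 2 (\<lambda>xs. Suc (xs ! 1) - triangle (xs ! 0))"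
      by (intro computable_n_diff computable_n_compose1[OF computable_Suc]
          computable_n_compose1[OF computable_triangle] computable_n_proj) simp_all
    show "\<exists>t. Suc z - triangle t = 0" for z
      using le_triangle[of "Suc z"] by (intro exI[of _ "Suc z"]) simp
  qed
  then show ?thesis by (simp add: Suc_le_eq)
qed

lemma computable_fst_prod_decode: "computable (\<lambda>z. fst (prod_decode z))"
proof -
  have "fst (prod_decode z) = z - triangle ((LEAST t. z < triangle t) - 1)" for z
  proof -
    obtain a b where "z = prod_encode (a, b)" by (metis prod_decode_inverse surj_pair)
    then show ?thesis by (simp add: Least_triangle_greater_prod_encode) (simp add: prod_encode_def)
  qed
  moreover have "computable (\<lambda>z. z - triangle ((LEAST t. z < triangle t) - 1))"
    unfolding computable_iff_computable_n
    by (intro computable_n_diff computable_n_proj computable_n_const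
        computable_n_compose1[OF computable_triangle]
        computable_n_compose1[OF computable_Least_triangle_greater]) simp_all
  ultimately show ?thesis by simp
qed

lemma computable_snd_prod_decode: "computable (\<lambda>z. snd (prod_decode z))"
proof -
  have "snd (prod_decode z) = (LEAST t. z < triangle t) - 1 - fst (prod_decode z)" for z
  proof -
    obtain a b where "z = prod_encode (a, b)" by (metis prod_decode_inverse surj_pair)
    then show ?thesis by (simp add: Least_triangle_greater_prod_encode)
  qed
  moreover have "computable (\<lambda>z. (LEAST t. z < triangle t) - 1 - fst (prod_decode z))"
    unfolding computable_iff_computable_n
    by (intro computable_n_diff computable_n_proj computable_n_const
        computable_n_compose1[OF computable_fst_prod_decode]
        computable_n_compose1[OF computable_Least_triangle_greater]) simp_all
  ultimately show ?thesis by simp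
qed

lemma computable_rat_fun_floor_inverse:
  assumes "computable f"
  shows "computable_rat_fun (\<lambda>\<epsilon>. f (nat \<lfloor>1 / \<epsilon>\<rfloor>))"
proof -
  define h where "h z = f (snd (prod_decode z) div fst (prod_decode z))" for z
  have "computable h"
    unfolding h_def computable_iff_computable_n
    by (intro computable_n_compose1[OF assms] computable_n_div computable_n_proj
        computable_n_compose1[OF computable_fst_prod_decode]
        computable_n_compose1[OF computable_snd_prod_decode]) simp_all
  moreover have "f (nat \<lfloor>1 / (of_nat a / of_nat b :: rat)\<rfloor>) = h (prod_encode (a, b))" for a b
    by (simp add: h_def floor_divide_of_nat_eq)
  ultimately show ?thesis unfolding computable_rat_fun_def by blast
qed

lemma computable_card_Int_lessThan:
  assumes "computable_set R"
  shows "computable (\<lambda>t. card (R \<inter> {..<t}))"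
proof (rule computable_primrec[where S="\<lambda>n p. p + (if n \<in> R then 1 else 0)"])
  show "computable_n 2 (\<lambda>xs. xs ! 1 + (if xs ! 0 \<in> R then 1 else 0))"
    using assms unfolding computable_set_def
    by (intro computable_n_add computable_n_proj
        computable_n_compose1[where f="\<lambda>x. if x \<in> R then 1 else 0"]) simp_all
  show "card (R \<inter> {..<Suc n}) = card (R \<inter> {..<n}) + (if n \<in> R then 1 else 0)" for n
    by (simp add: lessThan_Suc Int_insert_right card_insert_if)
qed simp

definition count_exceeds :: "nat set \<Rightarrow> nat \<Rightarrow> nat" where
  "count_exceeds R N = (LEAST t. N < card (R \<inter> {..<t}))"

lemma card_Int_lessThan_unbounded:
  fixes R :: "nat set"
  assumes "infinite R"
  shows "\<exists>t. N < card (R \<inter> {..<t})"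
proof -
  obtain B where B: "B \<subseteq> R" "finite B" "card B = Suc N"
    using infinite_arbitrarily_large[OF assms] by blast
  then have "B \<subseteq> R \<inter> {..<Suc (Max B)}"
    using Max_ge[OF B(2)] by (auto simp: less_Suc_eq_le)
  then have "card B \<le> card (R \<inter> {..<Suc (Max B)})" by (rule card_mono[rotated]) simp
  then show ?thesis using B(3) by (intro exI[of _ "Suc (Max B)"]) simp
qed

lemma less_count_exceeds:
  assumes "infinite R" "card (R \<inter> {..<m}) \<le> N"
  shows "m < count_exceeds R N"
proof (rule ccontr)
  assume "\<not> m < count_exceeds R N"
  then have "card (R \<inter> {..<count_exceeds R N}) \<le> card (R \<inter> {..<m})"
    by (intro card_mono) auto
  moreover have "N < card (R \<inter> {..<count_exceeds R N})"
    unfolding count_exceeds_def using card_Int_lessThan_unbounded[OF assms(1)] by (rule LeastI_ex)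
  ultimately show False using assms(2) by linarith
qed

lemma computable_count_exceeds:
  assumes "computable_set R" "infinite R"
  shows "computable (count_exceeds R)"
proof -
  have "computable (\<lambda>N. LEAST t. Suc N - card (R \<inter> {..<t}) = 0)"
  proof (rule computable_least)
    show "computable_n 2 (\<lambda>xs. Suc (xs ! 1) - card (R \<inter> {..<xs ! 0}))"
      by (intro computable_n_diff computable_n_compose1[OF computable_Suc]
          computable_n_compose1[OF computable_card_Int_lessThan[OF assms(1)]] computable_n_proj)
        simp_all
    show "\<exists>t. Suc N - card (R \<inter> {..<t}) = 0" for N
      using card_Int_lessThan_unbounded[OF assms(2)] by (simp add: Suc_le_eq)
  qed
  then show ?thesis by (simp add: Suc_le_eq count_exceeds_def[abs_def])
qed

lemma le_nat_floor_inverse_if_le_half_power: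
  fixes \<epsilon> :: rat
  assumes "0 < \<epsilon>" "real_of_rat \<epsilon> \<le> (1/2) ^ c"
  shows "c \<le> nat \<lfloor>1 / \<epsilon>\<rfloor>"
proof -
  have "real_of_rat (\<epsilon> * 2 ^ c) \<le> real_of_rat 1"
    using assms(2) by (simp add: of_rat_mult of_rat_power power_one_over field_simps)
  then have "(2 :: rat) ^ c \<le> 1 / \<epsilon>"
    using assms(1) by (simp add: of_rat_less_eq field_simps)
  then have "(2 :: int) ^ c \<le> \<lfloor>1 / \<epsilon>\<rfloor>" by (simp add: le_floor_iff)
  then have "2 ^ c \<le> nat \<lfloor>1 / \<epsilon>\<rfloor>" by (simp add: le_nat_iff)
  then show ?thesis using less_exp[of c] by linarith
qed

lemma inverse_power_less_if_floor_neg_log_less: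
  assumes "0 < x" "\<lfloor>- log 2 x\<rfloor> < int t"
  shows "1 / 2 ^ t < x"
proof -
  have "- real t < log 2 x" using assms(2) by (simp add: floor_less_iff)
  then have "2 powr (- real t) < x" using less_log_iff[of 2 x "- real t"] assms(1) by simp
  then show ?thesis by (simp add: powr_minus powr_realpow divide_inverse)
qed

lemma inverse_power_count_exceeds_less_if_cost_OmegaR_ge:
  fixes r :: "nat \<Rightarrow> rat" and \<epsilon> :: rat
  assumes "strict_mono r" "infinite R" "0 < \<epsilon>" "n < s"
    and "real_of_rat \<epsilon> \<le> cost_OmegaR r R n s"
  shows "1 / 2 ^ count_exceeds R (nat \<lfloor>1 / \<epsilon>\<rfloor>) < real_of_rat (r s - r n)"
proof -
  have "card (R \<inter> {..<nat (kfun r n s)}) \<le> nat \<lfloor>1 / \<epsilon>\<rfloor>"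
    using assms(3,5) unfolding cost_OmegaR_def by (rule le_nat_floor_inverse_if_le_half_power)
  with assms(2) have "nat (kfun r n s) < count_exceeds R (nat \<lfloor>1 / \<epsilon>\<rfloor>)"
    by (rule less_count_exceeds)
  then have "\<lfloor>- log 2 (real_of_rat (r s - r n))\<rfloor> < int (count_exceeds R (nat \<lfloor>1 / \<epsilon>\<rfloor>))"
    unfolding kfun_def by linarith
  moreover have "0 < real_of_rat (r s - r n)"
    using assms(1,4) by (simp add: strict_mono_less)
  ultimately show ?thesis by (intro inverse_power_less_if_floor_neg_log_less)
qed

lemma sum_increments_le_telescope:
  fixes f :: "nat \<Rightarrow> real"
  assumes "mono f" "\<forall>i<j. ss i \<le> ns (Suc i)"
  shows "(\<Sum>i\<le>j. f (ss i) - f (ns i)) \<le> f (ss j) - f (ns 0)"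
  using assms(2)
proof (induction j)
  case (Suc j)
  then have "(\<Sum>i\<le>j. f (ss i) - f (ns i)) \<le> f (ss j) - f (ns 0)" by simp
  moreover have "f (ss j) \<le> f (ns (Suc j))" using Suc.prems assms(1) by (simp add: monoD)
  ultimately show ?case by simp
qed simp

lemma sum_increments_le_bound:
  fixes f :: "nat \<Rightarrow> real"
  assumes "mono f" "\<And>s. f s \<le> M" "\<forall>i. Suc i < l \<longrightarrow> ss i \<le> ns (Suc i)"
  shows "(\<Sum>i<l. f (ss i) - f (ns i)) \<le> M - f 0"
proof (cases l)
  case 0
  then show ?thesis using assms(2)[of 0] by simp
next
  case (Suc j)
  then have "(\<Sum>i<l. f (ss i) - f (ns i)) \<le> f (ss j) - f (ns 0)"
    using sum_increments_le_telescope[OF assms(1), of j ss ns] assms(3)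
    by (simp add: lessThan_Suc_atMost)
  also have "\<dots> \<le> M - f 0"
    using assms(2)[of "ss j"] monoD[OF assms(1), of 0 "ns 0"] by simp
  finally show ?thesis .
qed

lemma real_le_mult_power_if_sum_le:
  fixes D :: "nat \<Rightarrow> real"
  assumes "\<And>i. i < l \<Longrightarrow> 1 / 2 ^ t < D i" "(\<Sum>i<l. D i) \<le> C"
  shows "real l \<le> C * 2 ^ t"
proof -
  have "real l / 2 ^ t = (\<Sum>i<l. 1 / 2 ^ t)" by simp
  also have "\<dots> \<le> (\<Sum>i<l. D i)"
    by (rule sum_mono) (use assms(1) in \<open>auto intro: less_imp_le\<close>)
  also have "\<dots> \<le> C" by (rule assms(2))
  finally show ?thesis by (simp add: field_simps)
qed

lemma cost_OmegaR_admissible_length_le: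
  fixes r :: "nat \<Rightarrow> rat" and \<epsilon> :: rat and x :: real
  assumes "strict_mono r" "\<And>s. real_of_rat (r s) \<le> x" "infinite R" "0 < \<epsilon>"
    and "\<forall>i<l. ns i < ss i" "\<forall>i. Suc i < l \<longrightarrow> ss i \<le> ns (Suc i)"
    and "\<forall>i<l. real_of_rat \<epsilon> \<le> cost_OmegaR r R (ns i) (ss i)"
  shows "l \<le> nat \<lceil>x - real_of_rat (r 0)\<rceil> * 2 ^ count_exceeds R (nat \<lfloor>1 / \<epsilon>\<rfloor>)"
proof -
  let ?f = "\<lambda>s. real_of_rat (r s)"
  have "mono ?f"
    using assms(1) by (auto simp: mono_def strict_mono_less_eq of_rat_less_eq)
  then have "(\<Sum>i<l. ?f (ss i) - ?f (ns i)) \<le> x - ?f 0"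
    using assms(2,6) by (rule sum_increments_le_bound)
  also have "\<dots> \<le> real (nat \<lceil>x - ?f 0\<rceil>)" by (rule real_nat_ceiling_ge)
  finally have "real l \<le> real (nat \<lceil>x - ?f 0\<rceil>) * 2 ^ count_exceeds R (nat \<lfloor>1 / \<epsilon>\<rfloor>)"
    using inverse_power_count_exceeds_less_if_cost_OmegaR_ge[OF assms(1,3,4)] assms(5,7)
    by (intro real_le_mult_power_if_sum_le) (auto simp: of_rat_diff)
  then have "real l \<le> real (nat \<lceil>x - ?f 0\<rceil> * 2 ^ count_exceeds R (nat \<lfloor>1 / \<epsilon>\<rfloor>))"
    by simp
  then show ?thesis by (simp only: of_nat_le_iff)
qed

theorem proposition7p2:
  fixes \<Omega> :: real and \<Omega>s :: "nat \<Rightarrow> rat" and R :: "nat set"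
  assumes "ml_random \<Omega>"
    and "left_ce_approx \<Omega>s \<Omega>"
    and "computable_set R"
    and "infinite R"
  shows "benign (cost_OmegaR \<Omega>s R)"
proof -
  have strict: "strict_mono \<Omega>s" and lim: "(\<lambda>s. real_of_rat (\<Omega>s s)) \<longlonglongrightarrow> \<Omega>"
    using assms(2) unfolding left_ce_approx_def by auto
  have "incseq (\<lambda>s. real_of_rat (\<Omega>s s))"
    using strict by (auto simp: incseq_def strict_mono_less_eq of_rat_less_eq)
  then have below: "real_of_rat (\<Omega>s s) \<le> \<Omega>" for s using lim by (rule incseq_le)
  define C where "C = nat \<lceil>\<Omega> - real_of_rat (\<Omega>s 0)\<rceil>"
  have "computable (\<lambda>N. C * 2 ^ count_exceeds R N)"
    unfolding computable_iff_computable_n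
    by (intro computable_n_mult computable_n_const computable_n_compose1[OF computable_power]
        computable_n_compose1[OF computable_count_exceeds[OF assms(3,4)]] computable_n_proj) simp
  then have "computable_rat_fun (\<lambda>\<epsilon>. C * 2 ^ count_exceeds R (nat \<lfloor>1 / \<epsilon>\<rfloor>))"
    by (rule computable_rat_fun_floor_inverse)
  moreover have "l \<le> C * 2 ^ count_exceeds R (nat \<lfloor>1 / \<epsilon>\<rfloor>)"
    if "0 < \<epsilon>" "\<forall>i<l. ns i < ss i" "\<forall>i. Suc i < l \<longrightarrow> ss i \<le> ns (Suc i)"
      "\<forall>i<l. real_of_rat \<epsilon> \<le> cost_OmegaR \<Omega>s R (ns i) (ss i)" for \<epsilon> l ns ss
    unfolding C_def using strict below assms(4) that by (rule cost_OmegaR_admissible_length_le)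
  ultimately show ?thesis unfolding benign_def by blast
qed

end
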